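(* Under the hypotheses of Theorem 2 (stated in the context), every limit point of the trial sequence $\{x^q\}$ generated by PLT is a global minimizer of $f$ on $[0,1]$.
   Context: Algorithm PLT (parallel information algorithm with local tuning) for minimizing $f$ on $[0,1]$; parameters: integer $N\ge1$, reliability parameter $r>1$, small number $\xi>0$. A "trial" is an evaluation of $f$ at a point. Step 0: perform $q(1)>1$ initial trials at $x^1=0$, $x^2=1$ and some interior points $x^3,\dots,x^{q(1)}\in(0,1)$; set $l=1$. At iteration $l$, let $q=q(l)$ be the number of trials made so far. Step 1: order all trial points as $0=x_1<x_2<\dots<x_q=1$ and set $z_i=f(x_i)$. Step 2: for $2\le j\le q$ compute $\mu_j=\max\{\lambda_j,\gamma_j,\xi\}$, where $\lambda_j=\max\{|z_i-z_{i-1}|/(x_i-x_{i-1})^{1/N}: i\in I_j\}$ with $I_2=\{2,3\}$, $I_j=\{j-1,j,j+1\}$ for $3\le j\le q-1$, $I_q=\{q-1,q\}$; and $\gamma_j=\mu\,(x_j-x_{j-1})^{1/N}/(X^{\max})^{1/N}$ with $\mu=\max\{|z_i-z_{i-1}|/(x_i-x_{i-1})^{1/N}:2\le i\le q\}$ and $X^{\max}=\max\{x_i-x_{i-1}:2\le i\le q\}$. Step 3: for $2\le j\le q$ compute the characteristic $R(j)=r\mu_j(x_j-x_{j-1})^{1/N}+\frac{(z_j-z_{j-1})^2}{r\mu_j(x_j-x_{j-1})^{1/N}}-(z_j+z_{j-1})$. Step 4: choose $p=p(l+1)\le q(l)-1$ and distinct indices $t_1,\dots,t_p$ being the indices of the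 $p$ largest characteristics ($t_1=\arg\max\{R(i):1<i\le q\}$, $t_k=\arg\max\{R(i):1<i\le q,\ i\ne t_s, 1\le s\le k-1\}$); the new trial points are $x^{q+k}=\tfrac12(x_{t_k-1}+x_{t_k})-\frac{1}{2r}\left(\frac{|z_{t_k}-z_{t_k-1}|}{\mu_{t_k}}\right)^N\operatorname{sign}(z_{t_k}-z_{t_k-1})$, $1\le k\le p$. Step 5: evaluate $f$ at these $p$ points in parallel, set $q(l+1)=q(l)+p(l+1)$, $l\leftarrow l+1$, and return to Step 1. Hypotheses of Theorem 2: $f:[0,1]\to\mathbb R$ satisfies $|f(x')-f(x'')|\le H|x'-x''|^{1/N}$; PLT runs indefinitely (stopping rule disregarded) producing trial points $\{x^q\}$; $p(l)\le Q<\infty$ for all $l>1$; $x^*$ is a global minimizer of $f$; for each iteration $l$, $j=j(l)$ indexes an interval $[x_{j-1},x_j]$ containing $x^*$, with $K_j=\max\{(z_{j-1}-f(x^* ))(x^*-x_{j-1})^{-1/N},(z_j-f(x^* ))(x_j-x^* )^{-1/N}\}$ and $M_j=|z_{j-1}-z_j|(x_j-x_{j-1})^{-1/N}$; and there is an infinite set of iteration numbers $\{h\}$ such that for all $l\in\{h\}$, $4^{1-1/N}K_j^2\ge M_j^2$ and $r\mu_j\ge 2^{1-1/N}K_j+(4^{1-1/N}K_j^2-M_j^2)^{1/2}$. *)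

theory Defs
  imports "HOL-Analysis.Analysis"
begin

text \<open>Trial points are x 1, x 2, ... (1-based). After q trials, pt x q i (1 \<le> i \<le> q)
  is the i-th smallest trial point, i.e. x_i in the paper's ordering.\<close>

definition pt :: "(nat \<Rightarrow> real) \<Rightarrow> nat \<Rightarrow> nat \<Rightarrow> real" where
  "pt x q i = sorted_list_of_set (x ` {1..q}) ! (i - 1)"

definition zv :: "(real \<Rightarrow> real) \<Rightarrow> (nat \<Rightarrow> real) \<Rightarrow> nat \<Rightarrow> nat \<Rightarrow> real" where
  "zv f x q i = f (pt x q i)"

definition slope :: "(real \<Rightarrow> real) \<Rightarrow> nat \<Rightarrow> (nat \<Rightarrow> real) \<Rightarrow> nat \<Rightarrow> nat \<Rightarrow> real" where
  "slope f N x q i = \<bar>zv f x q i - zv f x q (i - 1)\<bar> / (pt x q i - pt x q (i - 1)) powr (1 / real N)"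

definition Iset :: "nat \<Rightarrow> nat \<Rightarrow> nat set" where
  "Iset q j = {j - 1, j, j + 1} \<inter> {2..q}"

definition lam :: "(real \<Rightarrow> real) \<Rightarrow> nat \<Rightarrow> (nat \<Rightarrow> real) \<Rightarrow> nat \<Rightarrow> nat \<Rightarrow> real" where
  "lam f N x q j = Max (slope f N x q ` Iset q j)"

definition mu_all :: "(real \<Rightarrow> real) \<Rightarrow> nat \<Rightarrow> (nat \<Rightarrow> real) \<Rightarrow> nat \<Rightarrow> real" where
  "mu_all f N x q = Max (slope f N x q ` {2..q})"

definition Xmax :: "(nat \<Rightarrow> real) \<Rightarrow> nat \<Rightarrow> real" where
  "Xmax x q = Max ((\<lambda>i. pt x q i - pt x q (i - 1)) ` {2..q})"

definition gam :: "(real \<Rightarrow> real) \<Rightarrow> nat \<Rightarrow> (nat \<Rightarrow> real) \<Rightarrow> nat \<Rightarrow> nat \<Rightarrow> real" where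
  "gam f N x q j = mu_all f N x q * (pt x q j - pt x q (j - 1)) powr (1 / real N)
                   / (Xmax x q) powr (1 / real N)"

definition muj :: "(real \<Rightarrow> real) \<Rightarrow> nat \<Rightarrow> real \<Rightarrow> (nat \<Rightarrow> real) \<Rightarrow> nat \<Rightarrow> nat \<Rightarrow> real" where
  "muj f N \<xi> x q j = max (max (lam f N x q j) (gam f N x q j)) \<xi>"

definition charR :: "(real \<Rightarrow> real) \<Rightarrow> nat \<Rightarrow> real \<Rightarrow> real \<Rightarrow> (nat \<Rightarrow> real) \<Rightarrow> nat \<Rightarrow> nat \<Rightarrow> real" where
  "charR f N r \<xi> x q j =
     (let d = r * muj f N \<xi> x q j * (pt x q j - pt x q (j - 1)) powr (1 / real N)
      in d + (zv f x q j - zv f x q (j - 1))\<^sup>2 / d - (zv f x q j + zv f x q (j - 1)))"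

definition newpt :: "(real \<Rightarrow> real) \<Rightarrow> nat \<Rightarrow> real \<Rightarrow> real \<Rightarrow> (nat \<Rightarrow> real) \<Rightarrow> nat \<Rightarrow> nat \<Rightarrow> real" where
  "newpt f N r \<xi> x q t =
     (pt x q (t - 1) + pt x q t) / 2
     - 1 / (2 * r) * (\<bar>zv f x q t - zv f x q (t - 1)\<bar> / muj f N \<xi> x q t) ^ N
       * sgn (zv f x q t - zv f x q (t - 1))"

text \<open>PLT f N r xi x q p: the trial sequence x (with q l trials after iteration l and
  p (l+1) new trials at iteration l) is produced by algorithm PLT running indefinitely.
  Ties among characteristics may be broken arbitrarily.\<close>
definition PLT :: "(real \<Rightarrow> real) \<Rightarrow> nat \<Rightarrow> real \<Rightarrow> real \<Rightarrow> (nat \<Rightarrow> real) \<Rightarrow> (nat \<Rightarrow> nat) \<Rightarrow> (nat \<Rightarrow> nat) \<Rightarrow> bool" where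
  "PLT f N r \<xi> x q p \<longleftrightarrow>
     1 < q 1 \<and> x 1 = 0 \<and> x 2 = 1 \<and> (\<forall>i\<in>{3..q 1}. 0 < x i \<and> x i < 1) \<and> inj_on x {1..q 1} \<and>
     (\<forall>l\<ge>1. 1 \<le> p (Suc l) \<and> p (Suc l) \<le> q l - 1 \<and> q (Suc l) = q l + p (Suc l) \<and>
        (\<exists>t :: nat \<Rightarrow> nat. \<forall>k\<in>{1..p (Suc l)}.
            t k \<in> {2..q l} - t ` {1..<k} \<and>
            (\<forall>i\<in>{2..q l} - t ` {1..<k}. charR f N r \<xi> x (q l) i \<le> charR f N r \<xi> x (q l) (t k)) \<and>
            x (q l + k) = newpt f N r \<xi> x (q l) (t k)))"

text \<open>K_j and M_j of Theorem 2 (a division by 0 powr _ = 0 yields 0, used when x* is an endpoint).\<close>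
definition Kc :: "(real \<Rightarrow> real) \<Rightarrow> nat \<Rightarrow> (nat \<Rightarrow> real) \<Rightarrow> nat \<Rightarrow> nat \<Rightarrow> real \<Rightarrow> real" where
  "Kc f N x q j xs = max ((zv f x q (j - 1) - f xs) / (xs - pt x q (j - 1)) powr (1 / real N))
                         ((zv f x q j - f xs) / (pt x q j - xs) powr (1 / real N))"

definition Mc :: "(real \<Rightarrow> real) \<Rightarrow> nat \<Rightarrow> (nat \<Rightarrow> real) \<Rightarrow> nat \<Rightarrow> nat \<Rightarrow> real" where
  "Mc f N x q j = \<bar>zv f x q (j - 1) - zv f x q j\<bar> / (pt x q j - pt x q (j - 1)) powr (1 / real N)"

definition limit_point :: "(nat \<Rightarrow> real) \<Rightarrow> real \<Rightarrow> bool" where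
  "limit_point x y \<longleftrightarrow> (\<exists>\<sigma>. strict_mono \<sigma> \<and> (\<lambda>n. x (\<sigma> n)) \<longlonglongrightarrow> y)"

end

theory Submission
  imports Defs
begin

text \<open>
  Let y be a limit point and xs the global minimizer of the hypotheses, and suppose
  f y > f xs. (1) A new trial lies in the middle part of the interval it was placed into, so
  along new trials converging to y these intervals shrink and, by the Hoelder condition,
  their characteristics tend to -2 f y. (2) Theorem 2 itself: at the iterations in hs the
  characteristic of the interval containing xs is at least -2 f xs plus a positive multiple
  of (its length) powr (1/N). Together with (1) this forces trials to accumulate at xs.
  (3) Hence late in the run more than Q + 1 consecutive intervals lie near xs, each with a
  characteristic above that of the interval chosen near y; all of them would have to be
  chosen before it in one iteration, contradicting p l \<le> Q.
\<close>

section \<open>Sorted trial points\<close>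

lemma pt_strict_mono:
  assumes inj: "inj_on x {1..n}" and "1 \<le> i" "i < i'" "i' \<le> n"
  shows "pt x n i < pt x n i'"
proof -
  have "sorted_wrt (<) (sorted_list_of_set (x ` {1..n}))"
    by (simp add: strict_sorted_list_of_set)
  moreover have "length (sorted_list_of_set (x ` {1..n})) = n"
    using inj by (simp add: card_image)
  moreover have "i - 1 < i' - 1" "i' - 1 < n" using assms by auto
  ultimately show ?thesis unfolding pt_def by (metis sorted_wrt_nth_less)
qed

lemma pt_mono:
  assumes inj: "inj_on x {1..n}" and "1 \<le> i" "i \<le> i'" "i' \<le> n"
  shows "pt x n i \<le> pt x n i'"
  using pt_strict_mono[OF inj, of i i'] assms by (cases "i = i'") auto

lemma pt_eq_sorted_nth: "pt x n (Suc k) = sorted_list_of_set (x ` {1..n}) ! k"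
  by (simp add: pt_def)

lemma pt_image:
  assumes inj: "inj_on x {1..n}"
  shows "pt x n ` {1..n} = x ` {1..n}"
proof -
  have len: "length (sorted_list_of_set (x ` {1..n})) = n"
    using inj by (simp add: card_image)
  have "pt x n ` {1..n} = pt x n ` Suc ` {0..<n}"
    by (simp add: image_Suc_lessThan flip: lessThan_atLeast0)
  also have "\<dots> = nth (sorted_list_of_set (x ` {1..n})) ` {0..<n}"
    by (simp only: image_image pt_eq_sorted_nth)
  also have "\<dots> = set (sorted_list_of_set (x ` {1..n}))"
    using len by (simp add: nth_image)
  finally show ?thesis by simp
qed

lemma no_trial_between:
  assumes inj: "inj_on x {1..n}" and i: "2 \<le> i" "i \<le> n" and s: "s \<in> x ` {1..n}"
  shows "\<not> (pt x n (i - 1) < s \<and> s < pt x n i)"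
proof -
  obtain k where k: "k \<in> {1..n}" "s = pt x n k"
    using s pt_image[OF inj] by (metis imageE)
  show ?thesis
  proof (cases "k \<le> i - 1")
    case True
    have "pt x n k \<le> pt x n (i - 1)" by (rule pt_mono[OF inj]) (use k True i in auto)
    then show ?thesis using k by auto
  next
    case False
    have "pt x n i \<le> pt x n k" by (rule pt_mono[OF inj]) (use k False i in auto)
    then show ?thesis using k by auto
  qed
qed

lemma sorted_run_near:
  assumes inj: "inj_on x {1..n}" and B: "B \<subseteq> {1..n}" "B \<noteq> {}"
    and near: "\<forall>m\<in>B. \<bar>x m - c\<bar> < \<rho>"
  shows "\<exists>a b. 1 \<le> a \<and> b \<le> n \<and> card B \<le> b + 1 - a \<and> (\<forall>i\<in>{a..b}. \<bar>pt x n i - c\<bar> < \<rho>)"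
proof -
  define J where "J = {i \<in> {1..n}. \<bar>pt x n i - c\<bar> < \<rho>}"
  have "x ` B \<subseteq> pt x n ` J"
  proof
    fix v assume "v \<in> x ` B"
    then obtain m where m: "m \<in> B" "v = x m" by blast
    then obtain i where i: "i \<in> {1..n}" "pt x n i = v"
      using B pt_image[OF inj] by (metis image_eqI subsetD imageE)
    then have "i \<in> J" using near m by (auto simp: J_def)
    then show "v \<in> pt x n ` J" using i by blast
  qed
  have finJ: "finite J" by (simp add: J_def)
  have "card B = card (x ` B)" using card_image[OF inj_on_subset[OF inj B(1)]] by simp
  also have "\<dots> \<le> card (pt x n ` J)" using \<open>x ` B \<subseteq> pt x n ` J\<close> finJ by (intro card_mono) auto
  also have "\<dots> \<le> card J" by (rule card_image_le[OF finJ])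
  finally have "card B \<le> card J" .
  then have "J \<noteq> {}" using B finite_subset[OF B(1)] by (auto simp: card_gt_0_iff)
  define a b where "a = Min J" and "b = Max J"
  have ab: "a \<in> J" "b \<in> J" "J \<subseteq> {a..b}"
    using finJ \<open>J \<noteq> {}\<close> by (auto simp: a_def b_def)
  have "card J \<le> b + 1 - a" using card_mono[OF _ ab(3)] by simp
  moreover have "\<bar>pt x n i - c\<bar> < \<rho>" if "i \<in> {a..b}" for i
    using pt_mono[OF inj, of a i] pt_mono[OF inj, of i b] that ab by (auto simp: J_def abs_less_iff)
  ultimately show ?thesis using ab \<open>card B \<le> card J\<close> by (intro exI[of _ a] exI[of _ b]) (auto simp: J_def)
qed

section \<open>Real inequalities behind the lower bound of Theorem 2\<close>

text \<open>Concavity of t \<mapsto> t powr \<alpha>: the sum of the \<alpha>-th powers of the two pieces of a split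
  interval is at most 2 powr (1 - \<alpha>) times the \<alpha>-th power of its length.\<close>

lemma powr_sum_le:
  fixes a b \<alpha> :: real
  assumes a: "0 \<le> a" and b: "0 \<le> b" and al: "0 < \<alpha>" "\<alpha> \<le> 1"
  shows "a powr \<alpha> + b powr \<alpha> \<le> 2 powr (1 - \<alpha>) * (a + b) powr \<alpha>"
proof -
  have g1: "1 \<le> (2::real) powr (1 - \<alpha>)" using al by (intro ge_one_powr_ge_zero) auto
  consider "a = 0" | "b = 0" | "a > 0" "b > 0" using a b by linarith
  then show ?thesis
  proof cases
    case 1
    then show ?thesis using g1 b by (simp add: mult_le_cancel_right1)
  next
    case 2
    then show ?thesis using g1 a by (simp add: mult_le_cancel_right1)
  next
    case 3
    text \<open>Young's inequality for each of a and b against the midpoint w.\<close>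
    define w where "w = (a + b) / 2"
    have w: "w > 0" using 3 w_def by simp
    have y1: "a powr \<alpha> * w powr (1 - \<alpha>) \<le> \<alpha> * a + (1 - \<alpha>) * w"
      by (rule Youngs_inequality_0) (use al 3 w in auto)
    have y2: "b powr \<alpha> * w powr (1 - \<alpha>) \<le> \<alpha> * b + (1 - \<alpha>) * w"
      by (rule Youngs_inequality_0) (use al 3 w in auto)
    have "(a powr \<alpha> + b powr \<alpha>) * w powr (1 - \<alpha>) \<le> 2 * w"
    proof -
      have e: "\<alpha>*a + (1-\<alpha>)*w + (\<alpha>*b + (1-\<alpha>)*w) = 2*w" by (simp add: w_def algebra_simps)
      have "(a powr \<alpha> + b powr \<alpha>) * w powr (1 - \<alpha>) = a powr \<alpha> * w powr (1 - \<alpha>) + b powr \<alpha> * w powr (1 - \<alpha>)"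
        by (simp add: algebra_simps)
      then show ?thesis using y1 y2 e by linarith
    qed
    also have "2 * w = 2 * w powr \<alpha> * w powr (1 - \<alpha>)"
      using w by (simp add: mult.assoc flip: powr_add)
    finally have "a powr \<alpha> + b powr \<alpha> \<le> 2 * w powr \<alpha>"
      using w by (simp add: mult_le_cancel_right)
    also have "2 * w powr \<alpha> = 2 powr (1 - \<alpha>) * (a + b) powr \<alpha>"
    proof -
      have "(a + b) powr \<alpha> = 2 powr \<alpha> * w powr \<alpha>"
        unfolding w_def using 3 by (simp add: powr_divide)
      then have "2 powr (1 - \<alpha>) * (a + b) powr \<alpha> = (2 powr (1 - \<alpha>) * 2 powr \<alpha>) * w powr \<alpha>"
        by simp
      also have "2 powr (1 - \<alpha>) * 2 powr \<alpha> = (2::real)"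
        by (simp flip: powr_add)
      finally show ?thesis by simp
    qed
    finally show ?thesis .
  qed
qed

lemma bracket_excess_le:
  fixes g :: "real \<Rightarrow> real" and a b c \<alpha> :: real
  assumes c: "a \<le> c" "c \<le> b" and low: "g c \<le> g a" "g c \<le> g b" and \<alpha>: "0 < \<alpha>" "\<alpha> \<le> 1"
  defines "K \<equiv> max ((g a - g c) / (c - a) powr \<alpha>) ((g b - g c) / (b - c) powr \<alpha>)"
  shows "0 \<le> K" and "g a + g b - 2 * g c \<le> 2 powr (1 - \<alpha>) * K * (b - a) powr \<alpha>"
proof -
  show K0: "0 \<le> K" unfolding K_def using low by (simp add: le_max_iff_disj)
  have left: "g a - g c \<le> K * (c - a) powr \<alpha>"
  proof (cases "c = a")
    case False
    then have "0 < (c - a) powr \<alpha>" using c by simp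
    moreover have "(g a - g c) / (c - a) powr \<alpha> \<le> K" unfolding K_def by simp
    ultimately show ?thesis by (simp add: pos_divide_le_eq)
  qed simp
  have right: "g b - g c \<le> K * (b - c) powr \<alpha>"
  proof (cases "c = b")
    case False
    then have "0 < (b - c) powr \<alpha>" using c by simp
    moreover have "(g b - g c) / (b - c) powr \<alpha> \<le> K" unfolding K_def by simp
    ultimately show ?thesis by (simp add: pos_divide_le_eq)
  qed simp
  have "g a + g b - 2 * g c \<le> K * ((c - a) powr \<alpha> + (b - c) powr \<alpha>)"
    using left right by (simp add: algebra_simps)
  also have "\<dots> \<le> K * (2 powr (1 - \<alpha>) * (b - a) powr \<alpha>)"
    using powr_sum_le[of "c - a" "b - c" \<alpha>] c \<alpha> K0 by (intro mult_left_mono) auto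
  finally show "g a + g b - 2 * g c \<le> 2 powr (1 - \<alpha>) * K * (b - a) powr \<alpha>"
    by (simp add: mult_ac)
qed

lemma root_condition_margin:
  fixes s e S u M2 :: real
  assumes e: "e > 0" and s: "e \<le> s" "s \<le> S" and u: "0 \<le> u" and M2: "0 \<le> M2" "M2 \<le> u\<^sup>2"
    and cond: "u + sqrt (u\<^sup>2 - M2) \<le> s"
  shows "min (e/4) (3*e\<^sup>2/(16*S)) \<le> s - u + M2 / s"
proof -
  have sp: "s > 0" using e s by simp
  have Sp: "S > 0" using sp s by simp
  have M2s: "M2 / s \<ge> 0" using M2 sp by simp
  define v where "v = sqrt (u\<^sup>2 - M2)"
  have v: "v \<ge> 0" "v\<^sup>2 = u\<^sup>2 - M2" using M2 by (auto simp: v_def)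
  show ?thesis
  proof (cases "u \<le> e/2")
    case True
    then show ?thesis using s M2s e by (intro min.coboundedI1) linarith
  next
    case False
    have M2S: "M2 / S \<le> M2 / s" using M2 sp s by (intro divide_left_mono) auto
    show ?thesis
    proof (cases "v \<ge> u/2")
      case True
      then show ?thesis using cond M2s False unfolding v_def[symmetric] by (intro min.coboundedI1) linarith
    next
      case F2: False
      have "v\<^sup>2 \<le> (u/2)\<^sup>2" using F2 v by (intro power_mono) auto
      then have "M2 \<ge> 3*u\<^sup>2/4" using v by (simp add: power_divide)
      moreover have "u\<^sup>2 \<ge> (e/2)\<^sup>2" using False e by (intro power_mono) auto
      ultimately have "M2 \<ge> 3*e\<^sup>2/16" by (simp add: power_divide)
      then have "3*e\<^sup>2/(16*S) \<le> M2 / S" using Sp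
        by (metis divide_divide_eq_left divide_right_mono less_le)
      then show ?thesis using cond M2S v unfolding v_def[symmetric] by (intro min.coboundedI2) linarith
    qed
  qed
qed

lemma characteristic_margin:
  fixes s P za zb fc u M e S :: real
  assumes P: "0 < P" and e: "0 < e" "e \<le> s" "s \<le> S" and u: "0 \<le> u"
    and M: "M = \<bar>za - zb\<bar> / P" "M\<^sup>2 \<le> u\<^sup>2" and root: "u + sqrt (u\<^sup>2 - M\<^sup>2) \<le> s"
    and excess: "za + zb - 2 * fc \<le> u * P"
  shows "-2 * fc + min (e/4) (3*e\<^sup>2/(16*S)) * P \<le> s * P + (zb - za)\<^sup>2 / (s * P) - (zb + za)"
proof -
  have s: "0 < s" using e by simp
  have "(zb - za)\<^sup>2 = (M * P)\<^sup>2" using P M(1) by (simp add: power2_commute)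
  then have sq: "(zb - za)\<^sup>2 / (s * P) = M\<^sup>2 / s * P"
    using P s by (simp add: power2_eq_square field_simps)
  have "min (e/4) (3*e\<^sup>2/(16*S)) * P \<le> (s - u + M\<^sup>2 / s) * P"
    using root_condition_margin[OF e u _ M(2) root] P by (intro mult_right_mono) auto
  then show ?thesis using sq excess by (simp add: algebra_simps)
qed

section \<open>A run of PLT\<close>

locale plt_run =
  fixes f :: "real \<Rightarrow> real" and N :: nat and r \<xi> H :: real
    and x :: "nat \<Rightarrow> real" and q p :: "nat \<Rightarrow> nat"
  assumes N_pos: "N \<ge> 1" and r_gt1: "r > 1" and xi_pos: "\<xi> > 0"
    and hoelder: "\<forall>a\<in>{0..1}. \<forall>b\<in>{0..1}. \<bar>f a - f b\<bar> \<le> H * \<bar>a - b\<bar> powr (1 / real N)"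
    and run: "PLT f N r \<xi> x q p"
begin

lemma exponent_bounds: "0 < 1 / real N" "1 / real N \<le> 1"
  using N_pos by auto

lemma hoelder_at: "a \<in> {0..1} \<Longrightarrow> b \<in> {0..1} \<Longrightarrow> \<bar>f a - f b\<bar> \<le> H * \<bar>a - b\<bar> powr (1 / real N)"
  using hoelder by blast

lemma H_nonneg: "0 \<le> H"
  using hoelder_at[of 0 1] by simp

text \<open>(1 - 1/r)/2 is the relative distance a new point keeps from the ends of its interval.\<close>

lemma margin_pos: "0 < (1 - 1/r)/2"
  using r_gt1 by (simp add: field_simps)

lemma f_tendsto:
  assumes lim: "s \<longlonglongrightarrow> y" and unit: "\<And>n. s n \<in> {0..1}" and y: "y \<in> {0..1}"
  shows "(\<lambda>n. f (s n)) \<longlonglongrightarrow> f y"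
proof -
  have "(\<lambda>n. \<bar>s n - y\<bar>) \<longlonglongrightarrow> 0" using lim by (simp add: LIM_zero tendsto_rabs_zero)
  then have "(\<lambda>n. \<bar>s n - y\<bar> powr (1 / real N)) \<longlonglongrightarrow> 0"
    by (rule tendsto_zero_powrI) (use exponent_bounds in auto)
  then have "(\<lambda>n. H * \<bar>s n - y\<bar> powr (1 / real N)) \<longlonglongrightarrow> 0"
    by (rule tendsto_mult_right_zero)
  moreover have "\<forall>\<^sub>F n in sequentially. norm (f (s n) - f y) \<le> H * \<bar>s n - y\<bar> powr (1 / real N)"
    using hoelder_at[OF unit y] by simp
  ultimately have "(\<lambda>n. f (s n) - f y) \<longlonglongrightarrow> 0" by (metis Lim_null_comparison)
  then show ?thesis by (simp add: LIM_zero_iff)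
qed

lemma hoelder_nbhd:
  assumes c: "c \<in> {0..1}" and \<delta>: "0 < \<delta>"
  obtains \<rho> where "0 < \<rho>" "\<And>u. u \<in> {0..1} \<Longrightarrow> \<bar>u - c\<bar> < \<rho> \<Longrightarrow> f u < f c + \<delta>"
proof
  define \<rho> where "\<rho> = (\<delta> / (H + 1)) powr real N"
  have dh: "0 < \<delta> / (H + 1)" using \<delta> H_nonneg by simp
  then show "0 < \<rho>" unfolding \<rho>_def by (intro powr_gt_zero[THEN iffD2]) auto
  have root: "\<rho> powr (1 / real N) = \<delta> / (H + 1)"
    using dh N_pos \<delta> H_nonneg by (simp add: \<rho>_def powr_powr)
  fix u assume u: "u \<in> {0..1}" "\<bar>u - c\<bar> < \<rho>"
  have "\<bar>f u - f c\<bar> \<le> H * \<bar>u - c\<bar> powr (1 / real N)" by (rule hoelder_at[OF u(1) c])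
  also have "\<dots> \<le> H * (\<delta> / (H + 1))"
    using u(2) exponent_bounds H_nonneg root by (metis abs_ge_zero less_imp_le mult_left_mono powr_mono2)
  also have "\<dots> < \<delta>" using \<delta> H_nonneg by (simp add: field_simps)
  finally show "f u < f c + \<delta>" by linarith
qed

text \<open>t lists the intervals chosen at iteration l in order of decreasing characteristic.\<close>

definition selects :: "nat \<Rightarrow> (nat \<Rightarrow> nat) \<Rightarrow> bool" where
  "selects l t \<longleftrightarrow> (\<forall>k\<in>{1..p (Suc l)}.
      t k \<in> {2..q l} - t ` {1..<k} \<and>
      (\<forall>i\<in>{2..q l} - t ` {1..<k}. charR f N r \<xi> x (q l) i \<le> charR f N r \<xi> x (q l) (t k)) \<and>
      x (q l + k) = newpt f N r \<xi> x (q l) (t k))"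

definition sel :: "nat \<Rightarrow> nat \<Rightarrow> nat" where
  "sel l = (SOME t. selects l t)"

lemma run_init: "1 < q 1" "x 1 = 0" "x 2 = 1" "\<forall>i\<in>{3..q 1}. 0 < x i \<and> x i < 1"
    "inj_on x {1..q 1}"
  using run by (auto simp: PLT_def)

lemma run_step:
  assumes "l \<ge> 1"
  shows "1 \<le> p (Suc l)" "q (Suc l) = q l + p (Suc l)" "selects l (sel l)"
proof -
  show "1 \<le> p (Suc l)" "q (Suc l) = q l + p (Suc l)" using run assms by (auto simp: PLT_def)
  have "\<exists>t. selects l t" using run assms unfolding PLT_def selects_def by blast
  then show "selects l (sel l)" unfolding sel_def by (rule someI_ex)
qed

lemma sel:
  assumes "l \<ge> 1" "k \<in> {1..p (Suc l)}"
  shows "sel l k \<in> {2..q l}" "sel l k \<notin> sel l ` {1..<k}"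
    and "\<And>i. i \<in> {2..q l} - sel l ` {1..<k} \<Longrightarrow> charR f N r \<xi> x (q l) i \<le> charR f N r \<xi> x (q l) (sel l k)"
    and "x (q l + k) = newpt f N r \<xi> x (q l) (sel l k)"
  using run_step(3)[OF assms(1)] assms(2) unfolding selects_def by auto

lemma sel_inj: "l \<ge> 1 \<Longrightarrow> inj_on (sel l) {1..p (Suc l)}"
  by (rule inj_onI, rule ccontr) (metis sel(2) atLeastLessThan_iff atLeastAtMost_iff image_eqI linorder_neqE_nat)

text \<open>If the k-th chosen interval of iteration l has a smaller characteristic than every
  interval of a run {a+1..b}, that whole run was chosen before it, so b - a < k.\<close>

lemma selection_count:
  assumes l: "l \<ge> 1" and k: "k \<in> {1..p (Suc l)}" and run_sub: "{a+1..b} \<subseteq> {2..q l}"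
    and smaller: "\<And>i. i \<in> {a+1..b} \<Longrightarrow> charR f N r \<xi> x (q l) (sel l k) < charR f N r \<xi> x (q l) i"
  shows "b - a < k"
proof -
  have "{a+1..b} \<subseteq> sel l ` {1..<k}"
    using sel(3)[OF l k] smaller run_sub by (meson Diff_iff not_le subsetD subsetI)
  then have "card {a+1..b} \<le> card (sel l ` {1..<k})" by (intro card_mono) auto
  also have "\<dots> \<le> card {1..<k}" by (rule card_image_le) simp
  finally show ?thesis using k by auto
qed

lemma q_ge: "l \<ge> 1 \<Longrightarrow> l + 1 \<le> q l"
proof (induction l rule: nat_induct_at_least)
  case base then show ?case using run_init by simp
next
  case (Suc l) then show ?case using run_step[of l] by simp
qed

lemma q_mono: assumes "1 \<le> l" "l \<le> l'" shows "q l \<le> q l'"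
  using assms(2)
proof (induction l' rule: dec_induct)
  case (step m)
  then show ?case using run_step(2)[of m] assms(1) by simp
qed simp

lemma q_strict_mono: "1 \<le> l \<Longrightarrow> l < l' \<Longrightarrow> q l < q l'"
  using q_mono[of "Suc l" l'] run_step[of l] by simp

text \<open>Trial m > q 1 is created at iteration stage m, as one of the new points of that
  iteration; parent m is the interval it was placed into.\<close>

definition stage :: "nat \<Rightarrow> nat" where
  "stage m = (LEAST l. m \<le> q (Suc l))"

definition parent :: "nat \<Rightarrow> nat" where
  "parent m = sel (stage m) (m - q (stage m))"

lemma stage:
  assumes "q 1 < m"
  shows "1 \<le> stage m" "q (stage m) < m" "m \<le> q (Suc (stage m))"
proof -
  have "m \<le> q (Suc m)" using q_ge[of "Suc m"] by simp
  then show m: "m \<le> q (Suc (stage m))" unfolding stage_def by (rule LeastI)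
  show "1 \<le> stage m"
    using assms m by (metis One_nat_def Suc_leI gr0I not_le)
  then obtain l where l: "stage m = Suc l" using Suc_le_D by fastforce
  have "\<not> m \<le> q (Suc l)" using l unfolding stage_def by (metis lessI not_less_Least)
  then show "q (stage m) < m" using l by simp
qed

lemma stage_ge:
  assumes "1 \<le> l" "q l < m"
  shows "l \<le> stage m"
proof (rule ccontr)
  assume "\<not> l \<le> stage m"
  then have "q (Suc (stage m)) \<le> q l" using stage(1)[of m] q_mono[of 1 l] assms by (intro q_mono) auto
  then show False using stage(3)[of m] q_mono[of 1 l] assms by simp
qed

lemma stage_eq:
  assumes "1 \<le> l" "q l < m" "m \<le> q (Suc l)"
  shows "stage m = l"
proof -
  have "l \<le> stage m" by (rule stage_ge[OF assms(1,2)])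
  moreover have "\<not> Suc l \<le> stage m"
    using stage_ge[of "Suc l" m] stage(2)[of m] q_mono[of "Suc l" "stage m"] assms q_mono[of 1 l]
    by (metis le_trans less_le_not_le nat_le_linear not_less_eq_eq)
  ultimately show ?thesis by simp
qed

lemma new_trial:
  assumes "q 1 < m"
  shows "m - q (stage m) \<in> {1..p (Suc (stage m))}"
    and "parent m \<in> {2..q (stage m)}"
    and "x m = newpt f N r \<xi> x (q (stage m)) (parent m)"
proof -
  show k: "m - q (stage m) \<in> {1..p (Suc (stage m))}"
    using stage[OF assms] run_step(2)[of "stage m"] by auto
  show "parent m \<in> {2..q (stage m)}"
    unfolding parent_def by (rule sel(1)[OF stage(1)[OF assms] k])
  show "x m = newpt f N r \<xi> x (q (stage m)) (parent m)"
    using sel(4)[OF stage(1)[OF assms] k] stage(2)[OF assms] by (simp add: parent_def)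
qed

definition admissible :: "nat \<Rightarrow> bool" where
  "admissible n \<longleftrightarrow> inj_on x {1..n} \<and> x ` {1..n} \<subseteq> {0..1} \<and> 2 \<le> n"

context
  fixes n assumes adm: "admissible n"
begin

lemma adm_inj: "inj_on x {1..n}"
  using adm by (simp add: admissible_def)

lemma pt_unit: "i \<in> {1..n} \<Longrightarrow> pt x n i \<in> {0..1}"
proof -
  assume "i \<in> {1..n}"
  then have "pt x n i \<in> x ` {1..n}" using pt_image[OF adm_inj] by blast
  then show ?thesis using adm by (auto simp: admissible_def)
qed

lemma interval_unit:
  assumes "i \<in> {2..n}"
  shows "pt x n (i - 1) \<in> {0..1}" "pt x n i \<in> {0..1}"
proof -
  have "i - 1 \<in> {1..n}" "i \<in> {1..n}" using assms by auto
  then show "pt x n (i - 1) \<in> {0..1}" "pt x n i \<in> {0..1}" using pt_unit by blast+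
qed

lemma interval_pos: "i \<in> {2..n} \<Longrightarrow> pt x n (i - 1) < pt x n i"
  by (rule pt_strict_mono[OF adm_inj]) auto

lemma interval_root_pos: "i \<in> {2..n} \<Longrightarrow> 0 < (pt x n i - pt x n (i - 1)) powr (1 / real N)"
proof -
  assume "i \<in> {2..n}"
  from interval_pos[OF this] show ?thesis by simp
qed

lemma value_jump_le:
  assumes i: "i \<in> {2..n}"
  shows "\<bar>zv f x n i - zv f x n (i - 1)\<bar> \<le> H * (pt x n i - pt x n (i - 1)) powr (1 / real N)"
  using hoelder_at[OF interval_unit(2,1)[OF i]] interval_pos[OF i] by (simp add: zv_def)

lemma slope_le_H: "i \<in> {2..n} \<Longrightarrow> slope f N x n i \<le> H"
  unfolding slope_def using value_jump_le interval_root_pos by (simp add: pos_divide_le_eq)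

lemma lam_ge_slope: "i \<in> {2..n} \<Longrightarrow> slope f N x n i \<le> lam f N x n i"
  unfolding lam_def by (rule Max_ge) (auto simp: Iset_def)

lemma lam_le_H: "i \<in> {2..n} \<Longrightarrow> lam f N x n i \<le> H"
  unfolding lam_def using slope_le_H by (subst Max_le_iff) (auto simp: Iset_def)

lemma mu_all_bounds: "0 \<le> mu_all f N x n" "mu_all f N x n \<le> H"
proof -
  have two: "2 \<in> {2..n}" using adm by (auto simp: admissible_def)
  then have "slope f N x n 2 \<le> mu_all f N x n" unfolding mu_all_def by (intro Max_ge) auto
  then show "0 \<le> mu_all f N x n" by (simp add: slope_def) (smt (verit) divide_nonneg_nonneg abs_ge_zero powr_ge_zero)
  show "mu_all f N x n \<le> H"
    unfolding mu_all_def using slope_le_H two by (subst Max_le_iff) auto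
qed

lemma gam_le_H:
  assumes i: "i \<in> {2..n}"
  shows "gam f N x n i \<le> H"
proof -
  have "pt x n i - pt x n (i - 1) \<le> Xmax x n" unfolding Xmax_def using i by (intro Max_ge) auto
  then have "(pt x n i - pt x n (i - 1)) powr (1 / real N) \<le> (Xmax x n) powr (1 / real N)"
    using interval_pos[OF i] exponent_bounds by (intro powr_mono2) auto
  then have "(pt x n i - pt x n (i - 1)) powr (1 / real N) / (Xmax x n) powr (1 / real N) \<le> 1"
    using interval_root_pos[OF i] by (simp add: divide_le_eq)
  then have "gam f N x n i \<le> mu_all f N x n * 1"
    unfolding gam_def using mu_all_bounds
    by (simp add: mult_left_le times_divide_eq_right[symmetric] del: times_divide_eq_right)
  then show ?thesis using mu_all_bounds by simp
qed

lemma muj_bounds: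
  assumes i: "i \<in> {2..n}"
  shows "\<xi> \<le> muj f N \<xi> x n i" "muj f N \<xi> x n i \<le> max H \<xi>" "slope f N x n i \<le> muj f N \<xi> x n i"
  using lam_le_H[OF i] gam_le_H[OF i] lam_ge_slope[OF i] unfolding muj_def by auto

lemma newpt_margin:
  assumes i: "i \<in> {2..n}"
  defines "a \<equiv> pt x n (i - 1)" and "b \<equiv> pt x n i" and "c \<equiv> (1 - 1/r)/2"
  shows "a + c * (b - a) \<le> newpt f N r \<xi> x n i" "newpt f N r \<xi> x n i \<le> b - c * (b - a)"
proof -
  define D where "D = zv f x n i - zv f x n (i - 1)"
  define \<mu> where "\<mu> = muj f N \<xi> x n i"
  define W where "W = 1 / (2 * r) * (\<bar>D\<bar> / \<mu>) ^ N * sgn D"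
  have ab: "a < b" using interval_pos[OF i] by (simp add: a_def b_def)
  have mu: "0 < \<mu>" using muj_bounds(1)[OF i] xi_pos by (simp add: \<mu>_def)
  have "\<bar>D\<bar> / (b - a) powr (1 / real N) \<le> \<mu>"
    using muj_bounds(3)[OF i] by (simp add: slope_def a_def b_def D_def \<mu>_def)
  then have "\<bar>D\<bar> / \<mu> \<le> (b - a) powr (1 / real N)"
    using ab mu by (simp add: pos_divide_le_eq mult.commute)
  then have "(\<bar>D\<bar> / \<mu>) ^ N \<le> ((b - a) powr (1 / real N)) ^ N"
    using mu by (intro power_mono) auto
  also have "\<dots> = b - a" using ab N_pos by (simp add: powr_power)
  finally have "(\<bar>D\<bar> / \<mu>) ^ N \<le> b - a" .
  moreover have "0 \<le> (\<bar>D\<bar> / \<mu>) ^ N" using mu by simp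
  ultimately have "\<bar>(\<bar>D\<bar> / \<mu>) ^ N * sgn D\<bar> \<le> b - a"
    using ab by (cases "D = 0") (auto simp: abs_mult abs_sgn_eq)
  then have "\<bar>W\<bar> \<le> (b - a) / (2 * r)"
    using r_gt1 by (simp add: W_def abs_mult divide_right_mono mult.assoc)
  moreover define V where "V = (b - a) / (2 * r)"
  ultimately have W: "W \<le> V" "- V \<le> W" by auto
  have np: "newpt f N r \<xi> x n i = (a + b) / 2 - W"
    by (simp add: newpt_def a_def b_def D_def \<mu>_def W_def)
  have cm: "c * (b - a) = (b - a) / 2 - V"
    using r_gt1 by (simp add: c_def V_def field_simps)
  show "a + c * (b - a) \<le> newpt f N r \<xi> x n i" "newpt f N r \<xi> x n i \<le> b - c * (b - a)"
    unfolding np cm using W by (simp_all add: field_simps)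
qed

lemma newpt_inside:
  assumes i: "i \<in> {2..n}"
  shows "pt x n (i - 1) < newpt f N r \<xi> x n i" "newpt f N r \<xi> x n i < pt x n i"
  using newpt_margin[OF i] margin_pos interval_pos[OF i]
  by (smt (verit) mult_pos_pos)+

lemma newpt_strict_mono:
  assumes "t \<in> {2..n}" "t' \<in> {2..n}" "t < t'"
  shows "newpt f N r \<xi> x n t < newpt f N r \<xi> x n t'"
proof -
  have "pt x n t \<le> pt x n (t' - 1)" using assms by (intro pt_mono[OF adm_inj]) auto
  then show ?thesis using newpt_inside[OF assms(1)] newpt_inside[OF assms(2)] by linarith
qed

lemma newpt_fresh: "t \<in> {2..n} \<Longrightarrow> newpt f N r \<xi> x n t \<notin> x ` {1..n}"
  using no_trial_between[OF adm_inj] newpt_inside by auto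

lemma charR_lower:
  assumes i: "i \<in> {2..n}"
  shows "- (zv f x n i + zv f x n (i - 1)) < charR f N r \<xi> x n i"
proof -
  have "0 < r * muj f N \<xi> x n i * (pt x n i - pt x n (i - 1)) powr (1 / real N)"
    using r_gt1 muj_bounds(1)[OF i] xi_pos interval_root_pos[OF i] by simp
  then show ?thesis unfolding charR_def Let_def
    by (smt (verit) divide_nonneg_pos zero_le_power2)
qed

lemma charR_upper:
  assumes i: "i \<in> {2..n}"
  shows "charR f N r \<xi> x n i \<le> - (zv f x n i + zv f x n (i - 1))
          + (r * max H \<xi> + H\<^sup>2 / (r * \<xi>)) * (pt x n i - pt x n (i - 1)) powr (1 / real N)"
proof -
  define P where "P = (pt x n i - pt x n (i - 1)) powr (1 / real N)"
  define D where "D = zv f x n i - zv f x n (i - 1)"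
  define \<mu> where "\<mu> = muj f N \<xi> x n i"
  have P: "0 < P" using interval_root_pos[OF i] by (simp add: P_def)
  have mu: "\<xi> \<le> \<mu>" "\<mu> \<le> max H \<xi>" using muj_bounds[OF i] by (auto simp: \<mu>_def)
  have r0: "0 < r" using r_gt1 by simp
  have "D\<^sup>2 / (r * \<mu> * P) \<le> D\<^sup>2 / (r * \<xi> * P)"
    using mu r0 xi_pos P by (intro divide_left_mono) auto
  also have "\<dots> \<le> (H * P)\<^sup>2 / (r * \<xi> * P)"
  proof -
    have "\<bar>D\<bar> \<le> H * P" using value_jump_le[OF i] by (simp add: D_def P_def)
    then have "D\<^sup>2 \<le> (H * P)\<^sup>2" by (metis abs_ge_zero power2_abs power_mono)
    then show ?thesis using r0 xi_pos P by (intro divide_right_mono) auto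
  qed
  also have "\<dots> = H\<^sup>2 / (r * \<xi>) * P"
    using P r0 xi_pos by (simp add: power2_eq_square field_simps)
  finally have "D\<^sup>2 / (r * \<mu> * P) \<le> H\<^sup>2 / (r * \<xi>) * P" .
  moreover have "r * \<mu> * P \<le> r * max H \<xi> * P" using mu r0 P by simp
  moreover have "charR f N r \<xi> x n i = r * \<mu> * P + D\<^sup>2 / (r * \<mu> * P) - (zv f x n i + zv f x n (i - 1))"
    unfolding charR_def Let_def P_def D_def \<mu>_def by simp
  ultimately show ?thesis unfolding P_def[symmetric] by (simp add: algebra_simps)
qed


lemma charR_near:
  assumes i: "i \<in> {2..n}"
    and nbhd: "\<And>u. u \<in> {0..1} \<Longrightarrow> \<bar>u - c\<bar> < \<rho> \<Longrightarrow> f u < f c + \<delta>"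
    and near: "\<bar>pt x n (i - 1) - c\<bar> < \<rho>" "\<bar>pt x n i - c\<bar> < \<rho>"
  shows "-2 * f c - 2 * \<delta> < charR f N r \<xi> x n i"
proof -
  have "f (pt x n (i - 1)) < f c + \<delta>" "f (pt x n i) < f c + \<delta>"
    using nbhd[OF interval_unit(1)[OF i] near(1)] nbhd[OF interval_unit(2)[OF i] near(2)] .
  then show ?thesis using charR_lower[OF i] by (simp add: zv_def)
qed

end

lemma admissible_extend:
  assumes adm: "admissible n" and t_inj: "inj_on t {1..P}" and t: "t ` {1..P} \<subseteq> {2..n}"
    and new: "\<And>k. k \<in> {1..P} \<Longrightarrow> x (n + k) = newpt f N r \<xi> x n (t k)"
  shows "admissible (n + P)"
proof -
  define B where "B = (+) n ` {1..P}"
  have split: "{1..n + P} = {1..n} \<union> B" by (auto simp: B_def)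
  have xB: "x ` B = (\<lambda>k. x (n + k)) ` {1..P}" by (simp only: B_def image_image)
  have newpt_inj: "inj_on (newpt f N r \<xi> x n) {2..n}"
    by (rule strict_mono_on_imp_inj_on, rule strict_mono_onI) (use newpt_strict_mono[OF adm] in auto)
  have "inj_on (newpt f N r \<xi> x n \<circ> t) {1..P}"
    using comp_inj_on[OF t_inj inj_on_subset[OF newpt_inj t]] .
  then have "inj_on (x \<circ> (+) n) {1..P}"
    using inj_on_cong[of "{1..P}" "x \<circ> (+) n" "newpt f N r \<xi> x n \<circ> t"] new by simp
  then have inj_B: "inj_on x B" unfolding B_def by (rule inj_on_imageI)
  have fresh_unit: "x (n + k) \<notin> x ` {1..n} \<and> x (n + k) \<in> {0..1}" if k: "k \<in> {1..P}" for k
  proof -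
    have tk: "t k \<in> {2..n}" using t k by blast
    show ?thesis using new[OF k] newpt_fresh[OF adm tk] newpt_inside[OF adm tk] interval_unit[OF adm tk]
      by auto
  qed
  then have "x ` B \<inter> x ` {1..n} = {}" "x ` B \<subseteq> {0..1}" unfolding xB by blast+
  then have "inj_on x ({1..n} \<union> B)"
    using adm_inj[OF adm] inj_B by (subst inj_on_Un) blast
  moreover have "x ` ({1..n} \<union> B) \<subseteq> {0..1}"
    using adm \<open>x ` B \<subseteq> {0..1}\<close> by (auto simp: admissible_def)
  ultimately show ?thesis using adm split by (simp add: admissible_def)
qed

lemma admissible_stage: "l \<ge> 1 \<Longrightarrow> admissible (q l)"
proof (induction l rule: nat_induct_at_least)
  case base
  have "x i \<in> {0..1}" if i: "i \<in> {1..q 1}" for i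
  proof -
    consider "i = 1" | "i = 2" | "i \<in> {3..q 1}" using i by fastforce
    then show ?thesis using run_init by cases fastforce+
  qed
  then show ?case using run_init by (auto simp: admissible_def)
next
  case (Suc l)
  then have "admissible (q l + p (Suc l))"
    by (intro admissible_extend[where t = "sel l"] sel_inj) (use sel in auto)
  then show ?case using run_step(2)[OF Suc.hyps] by simp
qed

lemma trial_unit:
  assumes "m \<ge> 1"
  shows "x m \<in> {0..1}"
proof -
  have "x m \<in> x ` {1..q m}" using q_ge[of m] assms by auto
  then show ?thesis using admissible_stage[OF assms] by (auto simp: admissible_def)
qed

lemma limit_unit:
  assumes lim: "(\<lambda>n. x (s n)) \<longlonglongrightarrow> y" and new: "\<And>n. q 1 < s n"
  shows "y \<in> {0..1}"
proof -
  have "x (s n) \<in> {0..1}" for n using trial_unit[of "s n"] new[of n] run_init(1) by simp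
  then show ?thesis
    using LIMSEQ_le_const[OF lim, of 0] LIMSEQ_le_const2[OF lim, of 1] by auto
qed

definition left_end :: "nat \<Rightarrow> real" where
  "left_end m = pt x (q (stage m)) (parent m - 1)"

definition right_end :: "nat \<Rightarrow> real" where
  "right_end m = pt x (q (stage m)) (parent m)"

definition parent_char :: "nat \<Rightarrow> real" where
  "parent_char m = charR f N r \<xi> x (q (stage m)) (parent m)"

lemma parent_interval:
  assumes m: "q 1 < m"
  defines "c \<equiv> (1 - 1/r)/2"
  shows "left_end m + c * (right_end m - left_end m) \<le> x m"
    and "x m \<le> right_end m - c * (right_end m - left_end m)"
    and "left_end m < right_end m"
  using newpt_margin[OF admissible_stage[OF stage(1)[OF m]] new_trial(2)[OF m]]
    interval_pos[OF admissible_stage[OF stage(1)[OF m]] new_trial(2)[OF m]] new_trial(3)[OF m]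
  by (simp_all add: left_end_def right_end_def c_def)

lemma parent_char_le:
  assumes m: "q 1 < m"
  shows "parent_char m \<le> - (f (right_end m) + f (left_end m))
           + (r * max H \<xi> + H\<^sup>2 / (r * \<xi>)) * (right_end m - left_end m) powr (1 / real N)"
  using charR_upper[OF admissible_stage[OF stage(1)[OF m]] new_trial(2)[OF m]]
  by (simp add: parent_char_def left_end_def right_end_def zv_def)

lemma parent_ends_unit:
  assumes m: "q 1 < m"
  shows "left_end m \<in> {0..1}" "right_end m \<in> {0..1}"
  using interval_unit[OF admissible_stage[OF stage(1)[OF m]] new_trial(2)[OF m]]
  by (simp_all add: left_end_def right_end_def)

text \<open>If new trials converge to y, the intervals they were placed into shrink to 0: a long
  interval would keep its new point far from both ends, while an earlier trial close to y,
  hence close to that point, would lie strictly inside the interval.\<close>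

lemma chosen_intervals_shrink:
  assumes idx: "strict_mono idx" "\<And>n. q 1 < idx n" and conv: "(\<lambda>n. x (idx n)) \<longlonglongrightarrow> y"
  shows "(\<lambda>n. right_end (idx n) - left_end (idx n)) \<longlonglongrightarrow> 0"
proof (rule LIMSEQ_I)
  fix \<delta> :: real assume \<delta>: "\<delta> > 0"
  define c where "c = (1 - 1/r)/2"
  have c: "c > 0" using margin_pos by (simp add: c_def)
  obtain M where M: "\<And>n. n \<ge> M \<Longrightarrow> \<bar>x (idx n) - y\<bar> < c * \<delta> / 2"
    using LIMSEQ_D[OF conv, of "c * \<delta> / 2"] c \<delta> by auto
  define l0 where "l0 = Suc (stage (idx M))"
  have l0: "1 \<le> l0" "idx M \<le> q l0" using stage(3)[OF idx(2)] by (auto simp: l0_def)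
  show "\<exists>n0. \<forall>n\<ge>n0. norm (right_end (idx n) - left_end (idx n) - 0) < \<delta>"
  proof (intro exI allI impI)
    fix n assume n: "max M (q l0 + 1) \<le> n"
    define l where "l = stage (idx n)"
    have "q l0 < idx n" using n seq_suble[OF idx(1), of n] by simp
    then have "q l0 \<le> q l" using stage_ge l0 q_mono by (simp add: l_def)
    then have old: "x (idx M) \<in> x ` {1..q l}" using l0 idx(2)[of M] by auto
    have "\<bar>x (idx M) - y\<bar> < c * \<delta> / 2" "\<bar>x (idx n) - y\<bar> < c * \<delta> / 2" using M n by auto
    then have "\<bar>x (idx M) - x (idx n)\<bar> < c * \<delta>" by linarith
    then have "\<not> (left_end (idx n) < x (idx M) \<and> x (idx M) < right_end (idx n))"
      using no_trial_between[OF adm_inj[OF admissible_stage] _ _ old] new_trial(2)[OF idx(2)] stage(1)[OF idx(2)]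
      by (auto simp: left_end_def right_end_def l_def)
    then have "right_end (idx n) - left_end (idx n) < \<delta>"
      using parent_interval[OF idx(2), of n] \<open>\<bar>x (idx M) - x (idx n)\<bar> < c * \<delta>\<close> c
      unfolding c_def[symmetric] by (smt (verit, best) mult_left_mono)
    then show "norm (right_end (idx n) - left_end (idx n) - 0) < \<delta>"
      using parent_interval(3)[OF idx(2), of n] by simp
  qed
qed

lemma parent_char_limit:
  assumes idx: "strict_mono idx" "\<And>n. q 1 < idx n" and conv: "(\<lambda>n. x (idx n)) \<longlonglongrightarrow> y"
    and \<epsilon>: "\<epsilon> > 0"
  shows "\<forall>\<^sub>F n in sequentially. parent_char (idx n) < -2 * f y + \<epsilon>"
proof -
  define a b where "a n = left_end (idx n)" and "b n = right_end (idx n)" for n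
  define C where "C = r * max H \<xi> + H\<^sup>2 / (r * \<xi>)"
  have y: "y \<in> {0..1}" by (rule limit_unit[OF conv idx(2)])
  have len: "(\<lambda>n. b n - a n) \<longlonglongrightarrow> 0"
    unfolding a_def b_def by (rule chosen_intervals_shrink[OF idx conv])
  have inside: "a n \<le> x (idx n)" "x (idx n) \<le> b n" for n
    using parent_interval[OF idx(2), of n] margin_pos unfolding a_def b_def
    by (smt (verit, best) mult_pos_pos)+
  have "(\<lambda>n. b n - x (idx n)) \<longlonglongrightarrow> 0" "(\<lambda>n. x (idx n) - a n) \<longlonglongrightarrow> 0"
    by (rule tendsto_sandwich[of "\<lambda>_. 0" _ _ "\<lambda>n. b n - a n"]; use inside len in simp)+
  then have ab_lim: "b \<longlonglongrightarrow> y" "a \<longlonglongrightarrow> y"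
    using tendsto_add[OF conv] tendsto_diff[OF conv] by fastforce+
  have "(\<lambda>n. f (b n)) \<longlonglongrightarrow> f y"
    by (rule f_tendsto[OF ab_lim(1) _ y]) (unfold b_def, rule parent_ends_unit(2)[OF idx(2)])
  moreover have "(\<lambda>n. f (a n)) \<longlonglongrightarrow> f y"
    by (rule f_tendsto[OF ab_lim(2) _ y]) (unfold a_def, rule parent_ends_unit(1)[OF idx(2)])
  moreover have "(\<lambda>n. (b n - a n) powr (1 / real N)) \<longlonglongrightarrow> 0"
  proof (rule tendsto_zero_powrI[OF len])
    show "\<forall>\<^sub>F n in sequentially. 0 \<le> b n - a n"
      using inside by (auto intro: always_eventually order.trans)
  qed (use exponent_bounds in auto)
  ultimately have "(\<lambda>n. - (f (b n) + f (a n)) + C * (b n - a n) powr (1 / real N)) \<longlonglongrightarrow> - (f y + f y) + C * 0"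
    by (intro tendsto_intros)
  then have "\<forall>\<^sub>F n in sequentially. - (f (b n) + f (a n)) + C * (b n - a n) powr (1 / real N) < -2 * f y + \<epsilon>"
    using \<epsilon> by (intro order_tendstoD(2)) auto
  moreover have char_le: "parent_char (idx n) \<le> - (f (b n) + f (a n)) + C * (b n - a n) powr (1 / real N)" for n
    using parent_char_le[OF idx(2)] by (simp add: a_def b_def C_def)
  ultimately show ?thesis
    by (elim eventually_mono) (rule le_less_trans[OF char_le])
qed

definition theorem2_condition :: "real \<Rightarrow> nat \<Rightarrow> nat \<Rightarrow> bool" where
  "theorem2_condition xs n j \<longleftrightarrow>
     (Mc f N x n j)\<^sup>2 \<le> 4 powr (1 - 1 / real N) * (Kc f N x n j xs)\<^sup>2 \<and>
     2 powr (1 - 1 / real N) * Kc f N x n j xs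
       + sqrt (4 powr (1 - 1 / real N) * (Kc f N x n j xs)\<^sup>2 - (Mc f N x n j)\<^sup>2)
       \<le> r * muj f N \<xi> x n j"

text \<open>The constant of the lower bound in Theorem 2, obtained from root_condition_margin with
  \<mu>_j ranging over [\<xi>, max H \<xi>].\<close>

definition gap_const :: real where
  "gap_const = min (r * \<xi> / 4) (3 * (r * \<xi>)\<^sup>2 / (16 * (r * max H \<xi>)))"

lemma gap_const_pos: "0 < gap_const"
  using r_gt1 xi_pos by (simp add: gap_const_def less_max_iff_disj)

lemma minimizer_char_lower:
  assumes adm: "admissible n" and j: "j \<in> {2..n}"
    and xs: "xs \<in> {0..1}" "\<forall>u\<in>{0..1}. f xs \<le> f u"
    and bracket: "pt x n (j - 1) \<le> xs" "xs \<le> pt x n j"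
    and cond: "theorem2_condition xs n j"
  shows "-2 * f xs + gap_const * (pt x n j - pt x n (j - 1)) powr (1 / real N) \<le> charR f N r \<xi> x n j"
proof -
  define a b where "a = pt x n (j - 1)" and "b = pt x n j"
  define P where "P = (b - a) powr (1 / real N)"
  define K where "K = Kc f N x n j xs"
  define u where "u = 2 powr (1 - 1 / real N) * K"
  define s where "s = r * muj f N \<xi> x n j"
  have ab_unit: "a \<in> {0..1}" "b \<in> {0..1}" using interval_unit[OF adm j] by (simp_all add: a_def b_def)
  have K: "K = max ((f a - f xs) / (xs - a) powr (1 / real N)) ((f b - f xs) / (b - xs) powr (1 / real N))"
    by (simp add: K_def Kc_def a_def b_def zv_def)
  have excess: "0 \<le> K" "f a + f b - 2 * f xs \<le> u * P"
    using bracket_excess_le[of a xs b f "1 / real N"] bracket xs(2) ab_unit exponent_bounds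
    unfolding K[symmetric] by (simp_all add: a_def b_def u_def P_def mult_ac)
  have "(4::real) powr (1 - 1 / real N) = (2 powr (1 - 1 / real N))\<^sup>2"
    by (simp add: power2_eq_square flip: powr_mult)
  then have four: "4 powr (1 - 1 / real N) * K\<^sup>2 = u\<^sup>2" by (simp add: u_def power_mult_distrib)
  have s: "r * \<xi> \<le> s" "s \<le> r * max H \<xi>"
    using muj_bounds[OF adm j] r_gt1 by (simp_all add: s_def)
  have "-2 * f xs + gap_const * P \<le> s * P + (f b - f a)\<^sup>2 / (s * P) - (f b + f a)"
    unfolding gap_const_def
  proof (rule characteristic_margin[where M = "Mc f N x n j"])
    show "0 < P" using interval_pos[OF adm j] by (simp add: P_def a_def b_def)
    show "Mc f N x n j = \<bar>f a - f b\<bar> / P" by (simp add: Mc_def P_def a_def b_def zv_def)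
    show "(Mc f N x n j)\<^sup>2 \<le> u\<^sup>2" "u + sqrt (u\<^sup>2 - (Mc f N x n j)\<^sup>2) \<le> s"
      using cond four unfolding theorem2_condition_def by (simp_all add: K_def u_def s_def)
    show "0 \<le> u" using excess(1) by (simp add: u_def)
  qed (use s excess r_gt1 xi_pos in \<open>auto simp: algebra_simps\<close>)
  then show ?thesis by (simp add: charR_def Let_def P_def s_def a_def b_def zv_def)
qed

lemma limit_point_new_trials:
  assumes "limit_point x y"
  obtains idx where "strict_mono idx" "\<And>n. q 1 < idx n" "(\<lambda>n. x (idx n)) \<longlonglongrightarrow> y"
proof -
  obtain \<sigma> where \<sigma>: "strict_mono \<sigma>" "(\<lambda>n. x (\<sigma> n)) \<longlonglongrightarrow> y"
    using assms by (auto simp: limit_point_def)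
  define idx where "idx n = \<sigma> (n + Suc (q 1))" for n
  show ?thesis
  proof (rule that[of idx])
    show "strict_mono idx" using \<sigma>(1) by (simp add: idx_def strict_mono_def)
    show "q 1 < idx n" for n using seq_suble[OF \<sigma>(1), of "n + Suc (q 1)"] by (simp add: idx_def)
    show "(\<lambda>n. x (idx n)) \<longlonglongrightarrow> y"
      using LIMSEQ_ignore_initial_segment[OF \<sigma>(2), of "Suc (q 1)"] by (simp add: idx_def)
  qed
qed

lemma first_new_trial:
  assumes "l \<ge> 1"
  shows "parent_char (q l + 1) = charR f N r \<xi> x (q l) (sel l 1)"
proof -
  have "stage (q l + 1) = l" using stage_eq[OF assms] run_step(1,2)[OF assms] by simp
  then show ?thesis by (simp add: parent_char_def parent_def)
qed

end

section \<open>Convergence to global minimizers\<close>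

locale plt_theorem2 = plt_run +
  fixes xs :: real and j :: "nat \<Rightarrow> nat" and hs :: "nat set"
  assumes minimizer: "xs \<in> {0..1}" "\<forall>u\<in>{0..1}. f xs \<le> f u"
    and bracket: "\<forall>l\<ge>1. j l \<in> {2..q l} \<and> pt x (q l) (j l - 1) \<le> xs \<and> xs \<le> pt x (q l) (j l)"
    and hs: "infinite hs" "hs \<subseteq> {1..}"
    and cond: "\<forall>l\<in>hs. theorem2_condition xs (q l) (j l)"
begin

text \<open>If only finitely many trials come within \<rho> of xs, the intervals containing xs keep a
  length bounded below: their ends are among finitely many distinct trial points.\<close>

lemma isolated_minimizer_interval:
  assumes \<rho>: "0 < \<rho>" and fin: "finite {m. 1 \<le> m \<and> \<bar>x m - xs\<bar> < \<rho>}"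
  obtains \<delta> where "0 < \<delta>" "\<And>l. l \<ge> 1 \<Longrightarrow> \<delta> \<le> pt x (q l) (j l) - pt x (q l) (j l - 1)"
proof
  define F where "F = x ` {m. 1 \<le> m \<and> \<bar>x m - xs\<bar> < \<rho>}"
  define D where "D = (\<lambda>(u, v). \<bar>u - v\<bar>) ` {(u, v) \<in> F \<times> F. u \<noteq> v}"
  have "finite F" using fin by (simp add: F_def)
  then have "finite {(u, v) \<in> F \<times> F. u \<noteq> v}"
    by (metis (no_types, lifting) finite_SigmaI finite_subset mem_Collect_eq subsetI case_prodE)
  then have finD: "finite D" by (simp add: D_def)
  define \<delta> where "\<delta> = Min (insert \<rho> D)"
  show "0 < \<delta>" unfolding \<delta>_def using finD \<rho> by (subst Min_gr_iff) (auto simp: D_def)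
  fix l :: nat assume l: "l \<ge> 1"
  define a b where "a = pt x (q l) (j l - 1)" and "b = pt x (q l) (j l)"
  have adm: "admissible (q l)" by (rule admissible_stage[OF l])
  have jl: "j l \<in> {2..q l}" and ab: "a \<le> xs" "xs \<le> b" using bracket l by (auto simp: a_def b_def)
  have "a < b" using interval_pos[OF adm jl] by (simp add: a_def b_def)
  have inF: "pt x (q l) i \<in> F" if "i \<in> {1..q l}" "\<bar>pt x (q l) i - xs\<bar> < \<rho>" for i
    using that pt_image[OF adm_inj[OF adm]] by (force simp: F_def)
  show "\<delta> \<le> b - a"
  proof (rule ccontr)
    assume short: "\<not> \<delta> \<le> b - a"
    have "\<delta> \<le> \<rho>" unfolding \<delta>_def using finD by simp
    moreover have "j l - 1 \<in> {1..q l}" "j l \<in> {1..q l}" using jl by auto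
    ultimately have "a \<in> F" "b \<in> F"
      using inF[of "j l - 1"] inF[of "j l"] short ab by (auto simp: a_def b_def)
    then have "b - a \<in> D" unfolding D_def using \<open>a < b\<close> by (force intro: image_eqI[of _ _ "(b, a)"])
    then have "\<delta> \<le> b - a" unfolding \<delta>_def using finD by simp
    then show False using short by simp
  qed
qed

text \<open>Every neighbourhood of xs contains infinitely many trials: otherwise, at the iterations
  in hs, the interval containing xs would have a characteristic above -2 f xs + \<epsilon>, and so
  would the first chosen interval, contradicting the limit of the characteristics along a
  convergent subsequence of first new trials.\<close>

lemma minimizer_accumulates:
  assumes \<rho>: "0 < \<rho>"
  shows "infinite {m. 1 \<le> m \<and> \<bar>x m - xs\<bar> < \<rho>}"
proof
  assume "finite {m. 1 \<le> m \<and> \<bar>x m - xs\<bar> < \<rho>}"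
  then obtain \<delta> where \<delta>: "0 < \<delta>" "\<And>l. l \<ge> 1 \<Longrightarrow> \<delta> \<le> pt x (q l) (j l) - pt x (q l) (j l - 1)"
    using isolated_minimizer_interval[OF \<rho>] by blast
  define \<epsilon> where "\<epsilon> = gap_const * \<delta> powr (1 / real N)"
  have \<epsilon>: "0 < \<epsilon>" using gap_const_pos \<delta>(1) by (simp add: \<epsilon>_def)
  have first_high: "-2 * f xs + \<epsilon> \<le> parent_char (q l + 1)" if l: "l \<in> hs" for l
  proof -
    have l1: "l \<ge> 1" using l hs by auto
    have jl: "j l \<in> {2..q l}" using bracket l1 by auto
    have "\<delta> powr (1 / real N) \<le> (pt x (q l) (j l) - pt x (q l) (j l - 1)) powr (1 / real N)"
      using \<delta> l1 exponent_bounds by (intro powr_mono2) auto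
    then have "-2 * f xs + \<epsilon> \<le> charR f N r \<xi> x (q l) (j l)"
      using minimizer_char_lower[OF admissible_stage[OF l1] jl minimizer] bracket l1 cond l gap_const_pos
      unfolding \<epsilon>_def by (smt (verit, best) mult_left_mono)
    also have "\<dots> \<le> charR f N r \<xi> x (q l) (sel l 1)"
      using sel(3)[OF l1, of 1] run_step(1)[OF l1] jl by simp
    finally show ?thesis using first_new_trial[OF l1] by simp
  qed
  define e where "e = enumerate hs"
  have e: "strict_mono e" "\<And>n. e n \<in> hs" using hs(1) by (auto simp: e_def strict_mono_enumerate enumerate_in_set)
  have "range (\<lambda>n. x (q (e n) + 1)) \<subseteq> {0..1}" using trial_unit by auto
  then obtain y \<sigma> where \<sigma>: "strict_mono \<sigma>" "((\<lambda>n. x (q (e n) + 1)) \<circ> \<sigma>) \<longlonglongrightarrow> y"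
    using bounded_imp_convergent_subsequence bounded_subset[OF bounded_closed_interval] by meson
  define idx where "idx n = q (e (\<sigma> n)) + 1" for n
  have e1: "e n \<ge> 1" for n using e(2) hs(2) by auto
  have idx: "strict_mono idx" "q 1 < idx n" for n
    using e \<sigma>(1) q_strict_mono e1 q_mono[OF _ e1]
    by (auto simp: idx_def strict_mono_def le_imp_less_Suc)
  have conv: "(\<lambda>n. x (idx n)) \<longlonglongrightarrow> y" using \<sigma>(2) by (simp add: idx_def o_def)
  obtain n where "parent_char (idx n) < -2 * f y + \<epsilon>"
    using eventually_sequentially parent_char_limit[OF idx conv \<epsilon>] by (meson order_refl)
  moreover have "-2 * f xs + \<epsilon> \<le> parent_char (idx n)" using first_high e(2) by (simp add: idx_def)
  moreover have "y \<in> {0..1}" by (rule limit_unit[OF conv idx(2)])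
  ultimately show False using minimizer(2) by force
qed

lemma minimizer_cluster:
  assumes \<rho>: "0 < \<rho>"
  obtains L where "1 \<le> L"
    and "\<And>l. L \<le> l \<Longrightarrow> \<exists>a b. 1 \<le> a \<and> b \<le> q l \<and> C \<le> b + 1 - a \<and> (\<forall>i\<in>{a..b}. \<bar>pt x (q l) i - xs\<bar> < \<rho>)"
proof -
  obtain B where B: "finite B" "card B = Suc C" "B \<subseteq> {m. 1 \<le> m \<and> \<bar>x m - xs\<bar> < \<rho>}"
    using infinite_arbitrarily_large[OF minimizer_accumulates[OF \<rho>]] by blast
  have "B \<noteq> {}" using B(2) by auto
  define L where "L = Max B"
  have "L \<in> B" "\<And>m. m \<in> B \<Longrightarrow> m \<le> L"
    using Max_in[OF B(1) \<open>B \<noteq> {}\<close>] Max_ge[OF B(1)] by (simp_all add: L_def)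
  then have L: "1 \<le> L" "\<And>m. m \<in> B \<Longrightarrow> m \<le> L" using B(3) by auto
  show ?thesis
  proof (rule that[OF L(1)])
    fix l assume l: "L \<le> l"
    have "m \<le> q l" if "m \<in> B" for m
      using L(2)[OF that] q_ge[OF L(1)] q_mono[OF L(1) l] by linarith
    then have "B \<subseteq> {1..q l}" using B(3) by auto
    moreover have "\<forall>m\<in>B. \<bar>x m - xs\<bar> < \<rho>" using B(3) by auto
    moreover have "1 \<le> l" using L(1) l by simp
    ultimately obtain a b where "1 \<le> a" "b \<le> q l" "card B \<le> b + 1 - a"
      and "\<forall>i\<in>{a..b}. \<bar>pt x (q l) i - xs\<bar> < \<rho>"
      using sorted_run_near[OF adm_inj[OF admissible_stage] _ \<open>B \<noteq> {}\<close>] by blast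
    then show "\<exists>a b. 1 \<le> a \<and> b \<le> q l \<and> C \<le> b + 1 - a \<and> (\<forall>i\<in>{a..b}. \<bar>pt x (q l) i - xs\<bar> < \<rho>)"
      using B(2) by (intro exI[of _ a] exI[of _ b]) auto
  qed
qed

text \<open>Suppose f y > f xs. Trials accumulate at xs, so late in the
  run more than Q + 1 consecutive intervals lie close to xs, all with characteristic near
  -2 f xs; intervals chosen near y have characteristic near -2 f y, which is smaller, so all
  those intervals would have to be chosen first within a single iteration, i.e. more than Q
  points per iteration.\<close>

lemma limit_point_minimizer:
  assumes pbound: "\<forall>l>1. p l \<le> Q" and lp: "limit_point x y"
  shows "y \<in> {0..1} \<and> (\<forall>u\<in>{0..1}. f y \<le> f u)"
proof -
  obtain idx where idx: "strict_mono idx" "\<And>n. q 1 < idx n" and conv: "(\<lambda>n. x (idx n)) \<longlonglongrightarrow> y"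
    using limit_point_new_trials[OF lp] by blast
  have y: "y \<in> {0..1}" by (rule limit_unit[OF conv idx(2)])
  have "f y \<le> f xs"
  proof (rule ccontr)
    assume "\<not> f y \<le> f xs"
    define \<delta> where "\<delta> = (f y - f xs) / 4"
    have \<delta>: "0 < \<delta>" using \<open>\<not> f y \<le> f xs\<close> by (simp add: \<delta>_def)
    obtain \<rho> where \<rho>: "0 < \<rho>" "\<And>u. u \<in> {0..1} \<Longrightarrow> \<bar>u - xs\<bar> < \<rho> \<Longrightarrow> f u < f xs + \<delta>"
      using hoelder_nbhd[OF minimizer(1) \<delta>] by blast
    obtain L where L: "1 \<le> L" and cluster: "\<And>l. L \<le> l \<Longrightarrow> \<exists>a b. 1 \<le> a \<and> b \<le> q l \<and>
        Q + 2 \<le> b + 1 - a \<and> (\<forall>i\<in>{a..b}. \<bar>pt x (q l) i - xs\<bar> < \<rho>)"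
      using minimizer_cluster[OF \<rho>(1)] by blast
    have "\<forall>\<^sub>F n in sequentially. Suc (q L) \<le> n \<and> parent_char (idx n) < -2 * f y + 2 * \<delta>"
      using eventually_conj[OF eventually_ge_at_top parent_char_limit[OF idx conv, of "2 * \<delta>"]] \<delta>
      by simp
    then obtain n where "Suc (q L) \<le> n" and n2: "parent_char (idx n) < -2 * f y + 2 * \<delta>"
      by (auto simp: eventually_sequentially)
    then have n: "q L < idx n" "parent_char (idx n) < -2 * f y + 2 * \<delta>"
      using seq_suble[OF idx(1), of n] by auto
    define l where "l = stage (idx n)"
    define k where "k = idx n - q l"
    have l: "1 \<le> l" "L \<le> l" using stage(1)[OF idx(2)] stage_ge[OF L n(1)] by (simp_all add: l_def)
    have k: "k \<in> {1..p (Suc l)}" using new_trial(1)[OF idx(2)] by (simp add: k_def l_def)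
    obtain a b where ab: "1 \<le> a" "b \<le> q l" "Q + 2 \<le> b + 1 - a"
      and near: "\<forall>i\<in>{a..b}. \<bar>pt x (q l) i - xs\<bar> < \<rho>"
      using cluster[OF l(2)] by blast
    have "b - a < k"
    proof (rule selection_count[OF l(1) k])
      show run: "{a + 1..b} \<subseteq> {2..q l}" using ab by auto
      fix i assume i: "i \<in> {a + 1..b}"
      then have i2: "i \<in> {2..q l}" using run by blast
      have "i - 1 \<in> {a..b}" "i \<in> {a..b}" using i by auto
      then have "-2 * f xs - 2 * \<delta> < charR f N r \<xi> x (q l) i"
        using charR_near[OF admissible_stage[OF l(1)] i2 \<rho>(2)] near by blast
      moreover have "4 * \<delta> = f y - f xs" by (simp add: \<delta>_def)
      ultimately have high: "-2 * f y + 2 * \<delta> < charR f N r \<xi> x (q l) i" using \<delta> by linarith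
      have "parent_char (idx n) = charR f N r \<xi> x (q l) (sel l k)"
        by (simp add: parent_char_def parent_def l_def k_def)
      then show "charR f N r \<xi> x (q l) (sel l k) < charR f N r \<xi> x (q l) i"
        using n(2) high by linarith
    qed
    moreover have "p (Suc l) \<le> Q" using pbound l(1) by simp
    ultimately show False using ab k by simp
  qed
  then show ?thesis using y minimizer(2) by fastforce
qed

end

theorem corollary1:
  fixes f :: "real \<Rightarrow> real" and N :: nat and r \<xi> H xstar :: real
    and x :: "nat \<Rightarrow> real" and q p j :: "nat \<Rightarrow> nat" and Q :: nat and hs :: "nat set"
  assumes N: "N \<ge> 1" and r: "r > 1" and xi: "\<xi> > 0"
    and hoelder: "\<forall>a\<in>{0..1}. \<forall>b\<in>{0..1}. \<bar>f a - f b\<bar> \<le> H * \<bar>a - b\<bar> powr (1 / real N)"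
    and run: "PLT f N r \<xi> x q p"
    and pbound: "\<forall>l>1. p l \<le> Q"
    and xstar: "xstar \<in> {0..1}" "\<forall>u\<in>{0..1}. f xstar \<le> f u"
    and jint: "\<forall>l\<ge>1. j l \<in> {2..q l} \<and> pt x (q l) (j l - 1) \<le> xstar \<and> xstar \<le> pt x (q l) (j l)"
    and hs: "infinite hs" "hs \<subseteq> {1..}"
    and cond: "\<forall>l\<in>hs.
        4 powr (1 - 1 / real N) * (Kc f N x (q l) (j l) xstar)\<^sup>2 \<ge> (Mc f N x (q l) (j l))\<^sup>2 \<and>
        r * muj f N \<xi> x (q l) (j l) \<ge> 2 powr (1 - 1 / real N) * Kc f N x (q l) (j l) xstar
          + sqrt (4 powr (1 - 1 / real N) * (Kc f N x (q l) (j l) xstar)\<^sup>2 - (Mc f N x (q l) (j l))\<^sup>2)"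
  shows "\<forall>y. limit_point x y \<longrightarrow> y \<in> {0..1} \<and> (\<forall>u\<in>{0..1}. f y \<le> f u)"
proof -
  interpret plt_theorem2 f N r \<xi> H x q p xstar j hs
    using N r xi hoelder run xstar jint hs cond
    by unfold_locales (auto simp: plt_run.theorem2_condition_def[OF plt_run.intro])
  show ?thesis using limit_point_minimizer[OF pbound] by blast
qed

end
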